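(* Let $Q$ be a based quantale with base locale $Q_0$, and let $\varsigma$ be an equivariant support on $Q$. Then $\varsigma:Q\to Q_0$ is left adjoint to the sup-lattice homomorphism $Q_0\to Q$, $a\mapsto a\triangleright 1_Q$, and the adjunction is a reflection (i.e. $\varsigma(a\triangleright 1_Q)=a$ for all $a\in Q_0$). Hence the support $\varsigma$ is uniquely determined, and $a\mapsto a\triangleright1_Q$ also preserves arbitrary meets.
   Context: For a locale $A$, an $A$-$A$-bimodule is a sup-lattice $M$ with actions $a\triangleright m$, $m\triangleleft a$ preserving joins in each variable, with $1_A\triangleright m=m$, $(a\wedge b)\triangleright m=a\triangleright(b\triangleright m)$, $m\triangleleft1_A=m$, $m\triangleleft(a\wedge b)=(m\triangleleft a)\triangleleft b$, $(a\triangleright m)\triangleleft b=a\triangleright(m\triangleleft b)$. An $A$-$A$-quantale is such a $Q$ with associative join-preserving multiplication and $(a\triangleright x)y=a\triangleright(xy)$, $(x\triangleleft a)y=x(a\triangleright y)$, $(xy)\triangleleft a=x(y\triangleleft a)$; involutive if there is a join-preserving $x\mapsto x^*$ with $x^{**}=x$, $(xy)^*=y^*x^*$, $(a\triangleright(x\triangleleft b))^*=b\triangleright(x^*\triangleleft a)$. A based quantale is an involutive $Q_0$-$Q_0$-quantale for some locale $Q_0$; $1_Q$ is its top. A support is a join-preserving $\varsigma:Q\to Q_0$ with $\varsigma(1_Q)=1_{Q_0}$, $\varsigma(x)\triangleright y\le xx^*y$, $\varsigma(x)\triangleright x=x$ for all $x,y\in Q$; it is equivariant if $\varsigma(a\triangleright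 x)=a\wedge\varsigma(x)$ for all $a\in Q_0$, $x\in Q$. *)

theory Defs
  imports Main
begin

text \<open>Sup-lattices are modelled by the class complete_lattice; a join-preserving map
  (sup-lattice homomorphism) preserves all joins, including the empty one.\<close>

definition sup_pres :: "('a::complete_lattice \<Rightarrow> 'b::complete_lattice) \<Rightarrow> bool" where
  "sup_pres f \<longleftrightarrow> (\<forall>S. f (Sup S) = Sup (f ` S))"

definition is_locale :: "'b::complete_lattice itself \<Rightarrow> bool" where
  "is_locale _ \<longleftrightarrow> (\<forall>(a::'b) S. inf a (Sup S) = Sup ((\<lambda>b. inf a b) ` S))"

definition bimodule ::
  "('b::complete_lattice \<Rightarrow> 'a::complete_lattice \<Rightarrow> 'a) \<Rightarrow> ('a \<Rightarrow> 'b \<Rightarrow> 'a) \<Rightarrow> bool" where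
  "bimodule lact ract \<longleftrightarrow>
     (\<forall>a. sup_pres (lact a)) \<and> (\<forall>m. sup_pres (\<lambda>a. lact a m)) \<and>
     (\<forall>a. sup_pres (\<lambda>m. ract m a)) \<and> (\<forall>m. sup_pres (ract m)) \<and>
     (\<forall>m. lact top m = m) \<and>
     (\<forall>a b m. lact (inf a b) m = lact a (lact b m)) \<and>
     (\<forall>m. ract m top = m) \<and>
     (\<forall>a b m. ract m (inf a b) = ract (ract m a) b) \<and>
     (\<forall>a b m. ract (lact a m) b = lact a (ract m b))"

definition bi_quantale ::
  "('b::complete_lattice \<Rightarrow> 'a::complete_lattice \<Rightarrow> 'a) \<Rightarrow> ('a \<Rightarrow> 'b \<Rightarrow> 'a)
     \<Rightarrow> ('a \<Rightarrow> 'a \<Rightarrow> 'a) \<Rightarrow> bool" where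
  "bi_quantale lact ract mult \<longleftrightarrow>
     bimodule lact ract \<and>
     (\<forall>x y z. mult (mult x y) z = mult x (mult y z)) \<and>
     (\<forall>x. sup_pres (mult x)) \<and> (\<forall>y. sup_pres (\<lambda>x. mult x y)) \<and>
     (\<forall>a x y. mult (lact a x) y = lact a (mult x y)) \<and>
     (\<forall>a x y. mult (ract x a) y = mult x (lact a y)) \<and>
     (\<forall>a x y. ract (mult x y) a = mult x (ract y a))"

definition involutive_bi_quantale ::
  "('b::complete_lattice \<Rightarrow> 'a::complete_lattice \<Rightarrow> 'a) \<Rightarrow> ('a \<Rightarrow> 'b \<Rightarrow> 'a)
     \<Rightarrow> ('a \<Rightarrow> 'a \<Rightarrow> 'a) \<Rightarrow> ('a \<Rightarrow> 'a) \<Rightarrow> bool" where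
  "involutive_bi_quantale lact ract mult star \<longleftrightarrow>
     bi_quantale lact ract mult \<and> sup_pres star \<and>
     (\<forall>x. star (star x) = x) \<and>
     (\<forall>x y. star (mult x y) = mult (star y) (star x)) \<and>
     (\<forall>a b x. star (lact a (ract x b)) = lact b (ract (star x) a))"

text \<open>Based quantale: involutive Q0-Q0-quantale for a locale Q0 (the type 'b).\<close>
definition based_quantale ::
  "('b::complete_lattice \<Rightarrow> 'a::complete_lattice \<Rightarrow> 'a) \<Rightarrow> ('a \<Rightarrow> 'b \<Rightarrow> 'a)
     \<Rightarrow> ('a \<Rightarrow> 'a \<Rightarrow> 'a) \<Rightarrow> ('a \<Rightarrow> 'a) \<Rightarrow> bool" where
  "based_quantale lact ract mult star \<longleftrightarrow>
     is_locale TYPE('b) \<and> involutive_bi_quantale lact ract mult star"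

definition support ::
  "('b::complete_lattice \<Rightarrow> 'a::complete_lattice \<Rightarrow> 'a) \<Rightarrow> ('a \<Rightarrow> 'a \<Rightarrow> 'a) \<Rightarrow> ('a \<Rightarrow> 'a)
     \<Rightarrow> ('a \<Rightarrow> 'b) \<Rightarrow> bool" where
  "support lact mult star \<sigma> \<longleftrightarrow>
     sup_pres \<sigma> \<and> \<sigma> top = top \<and>
     (\<forall>x y. lact (\<sigma> x) y \<le> mult (mult x (star x)) y) \<and>
     (\<forall>x. lact (\<sigma> x) x = x)"

definition equivariant ::
  "('b::complete_lattice \<Rightarrow> 'a::complete_lattice \<Rightarrow> 'a) \<Rightarrow> ('a \<Rightarrow> 'b) \<Rightarrow> bool" where
  "equivariant lact \<sigma> \<longleftrightarrow> (\<forall>a x. \<sigma> (lact a x) = inf a (\<sigma> x))"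

end

theory Submission
  imports Defs
begin

text \<open>Equivariance and the unit axiom of a support give the reflection
  \<open>\<sigma>(a \<triangleright> 1) = a \<and> \<sigma>(1) = a\<close>; together with \<open>\<sigma>(x) \<triangleright> x = x\<close> and
  monotonicity of the action this yields the adjunction \<open>\<sigma> \<dashv> (- \<triangleright> 1)\<close>.
  Uniqueness of \<open>\<sigma>\<close> and preservation of meets by \<open>- \<triangleright> 1\<close> are then general
  facts about Galois connections.\<close>

lemma sup_pres_mono:
  assumes "sup_pres f" "x \<le> y"
  shows "f x \<le> f y"
proof -
  have "f y = f (Sup {x, y})" using assms(2) by (simp add: sup_absorb2)
  also have "\<dots> = Sup {f x, f y}"
    using assms(1) unfolding sup_pres_def by (metis image_insert image_empty)
  finally show ?thesis by (metis Sup_upper insertI1)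
qed

lemma galois_left_adjoint_unique:
  fixes f f' :: "'a::complete_lattice \<Rightarrow> 'b::complete_lattice"
  assumes "\<And>x a. f x \<le> a \<longleftrightarrow> x \<le> g a" and "\<And>x a. f' x \<le> a \<longleftrightarrow> x \<le> g a"
  shows "f' = f"
proof
  fix x
  have "f' x \<le> f x" using assms(1)[of x "f x"] assms(2)[of x "f x"] by simp
  moreover have "f x \<le> f' x" using assms(1)[of x "f' x"] assms(2)[of x "f' x"] by simp
  ultimately show "f' x = f x" by (rule antisym)
qed

lemma galois_right_adjoint_Inf:
  fixes f :: "'a::complete_lattice \<Rightarrow> 'b::complete_lattice"
  assumes adj: "\<And>x a. f x \<le> a \<longleftrightarrow> x \<le> g a"
  shows "g (Inf S) = Inf (g ` S)"
proof (rule antisym)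
  have "g (Inf S) \<le> g s" if "s \<in> S" for s
  proof -
    have "f (g (Inf S)) \<le> Inf S" using adj by simp
    also have "\<dots> \<le> s" using that by (rule Inf_lower)
    finally show ?thesis using adj by simp
  qed
  then show "g (Inf S) \<le> Inf (g ` S)" by (rule INF_greatest)
next
  have "f (Inf (g ` S)) \<le> s" if "s \<in> S" for s
  proof -
    have "Inf (g ` S) \<le> g s" using that by (simp add: INF_lower)
    then show ?thesis using adj by simp
  qed
  then have "f (Inf (g ` S)) \<le> Inf S" by (rule Inf_greatest)
  then show "Inf (g ` S) \<le> g (Inf S)" using adj by simp
qed

lemma based_quantale_bimodule:
  "based_quantale lact ract mult star \<Longrightarrow> bimodule lact ract"
  unfolding based_quantale_def involutive_bi_quantale_def bi_quantale_def by blast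

lemma bimodule_lact_mono:
  assumes "bimodule lact ract" "a \<le> b" "m \<le> n"
  shows "lact a m \<le> lact b n"
proof -
  have "sup_pres (\<lambda>a. lact a m)" and "sup_pres (lact b)"
    using assms(1) unfolding bimodule_def by blast+
  then have "lact a m \<le> lact b m" and "lact b m \<le> lact b n"
    using sup_pres_mono assms(2,3) by fastforce+
  then show ?thesis by (rule order_trans)
qed

lemma equivariant_support_reflection:
  assumes "support lact mult star \<sigma>" and "equivariant lact \<sigma>"
  shows "\<sigma> (lact a top) = a"
  using assms unfolding support_def equivariant_def by simp

lemma equivariant_support_galois:
  assumes "bimodule lact ract" and supp: "support lact mult star \<sigma>"
    and equiv: "equivariant lact \<sigma>"
  shows "\<sigma> x \<le> a \<longleftrightarrow> x \<le> lact a top"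
proof
  assume "\<sigma> x \<le> a"
  have "x = lact (\<sigma> x) x" using supp unfolding support_def by simp
  also have "\<dots> \<le> lact a top"
    using bimodule_lact_mono[OF assms(1) \<open>\<sigma> x \<le> a\<close> top_greatest] .
  finally show "x \<le> lact a top" .
next
  assume "x \<le> lact a top"
  then have "\<sigma> x \<le> \<sigma> (lact a top)"
    using supp unfolding support_def by (blast intro: sup_pres_mono)
  then show "\<sigma> x \<le> a" using equivariant_support_reflection[OF supp equiv] by simp
qed

theorem lemma3p17:
  fixes lact :: "'b::complete_lattice \<Rightarrow> 'a::complete_lattice \<Rightarrow> 'a"
    and ract :: "'a \<Rightarrow> 'b \<Rightarrow> 'a"
    and mult :: "'a \<Rightarrow> 'a \<Rightarrow> 'a"
    and star :: "'a \<Rightarrow> 'a"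
    and \<sigma> :: "'a \<Rightarrow> 'b"
  assumes "based_quantale lact ract mult star"
    and "support lact mult star \<sigma>"
    and "equivariant lact \<sigma>"
  shows "sup_pres (\<lambda>a. lact a top)
    \<and> (\<forall>x a. \<sigma> x \<le> a \<longleftrightarrow> x \<le> lact a top)
    \<and> (\<forall>a. \<sigma> (lact a top) = a)
    \<and> (\<forall>\<tau>. support lact mult star \<tau> \<and> equivariant lact \<tau> \<longrightarrow> \<tau> = \<sigma>)
    \<and> (\<forall>S. lact (Inf S) top = Inf ((\<lambda>a. lact a top) ` S))"
proof -
  have bimod: "bimodule lact ract" using assms(1) by (rule based_quantale_bimodule)
  then have "sup_pres (\<lambda>a. lact a top)" unfolding bimodule_def by blast
  moreover have adj: "\<And>x a. \<sigma> x \<le> a \<longleftrightarrow> x \<le> lact a top"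
    using equivariant_support_galois[OF bimod assms(2,3)] .
  moreover have "\<forall>a. \<sigma> (lact a top) = a"
    using equivariant_support_reflection[OF assms(2,3)] by blast
  moreover have "\<tau> = \<sigma>" if "support lact mult star \<tau>" and "equivariant lact \<tau>" for \<tau>
    using galois_left_adjoint_unique[OF adj equivariant_support_galois[OF bimod that]] .
  moreover have "lact (Inf S) top = Inf ((\<lambda>a. lact a top) ` S)" for S
    using galois_right_adjoint_Inf[OF adj] .
  ultimately show ?thesis by blast
qed

end
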